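(* Let $f$ satisfy conditions (1) and (2b), let $p>0$ and $\zeta>1$. In the expression \[ \int_0^\infty(1-2s)\,e^{-\zeta s}\sum_{n=0}^\infty c_{2n}\,p^n\sum_{k=0}^n(-1)^{n-k}\frac{(\zeta-1)^k}{(n-k)!\,(k!)^2}\,s^k\,ds \] the order of summation and integration may be reversed, for arbitrary values of $p$.
   Context: $f:[0,\infty)\to\mathbb{R}$; $c_n=2\pi\int_0^\infty f(r)\,r^{n+1}dr$. Condition (1): there is a constant $F$ with $0\le f(r)\le F$ for all $r\ge0$, $c_0$ exists and $c_0>0$. Condition (2b): $c_{2n}$ exists for all $n\in\mathbb{N}_0$ and $c_n^{1/n}=o(n^{1/2})$ as $n\to\infty$. (In the paper $\zeta=p/p'+1$ with $0<p'<p$.) *)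

theory Defs
  imports "HOL-Analysis.Analysis" "HOL-Library.Landau_Symbols"
begin

definition moment :: "(real \<Rightarrow> real) \<Rightarrow> nat \<Rightarrow> real" where
  "moment f n = 2 * pi * integral {0..} (\<lambda>r. f r * r ^ (n + 1))"

definition moment_exists :: "(real \<Rightarrow> real) \<Rightarrow> nat \<Rightarrow> bool" where
  "moment_exists f n \<longleftrightarrow> (\<lambda>r. f r * r ^ (n + 1)) integrable_on {0..}"

definition lemma9_term :: "(real \<Rightarrow> real) \<Rightarrow> real \<Rightarrow> real \<Rightarrow> nat \<Rightarrow> real \<Rightarrow> real" where
  "lemma9_term f p \<zeta> n s = (1 - 2 * s) * exp (- \<zeta> * s) * moment f (2 * n) * p ^ n *
     (\<Sum>k\<le>n. (-1) ^ (n - k) * (\<zeta> - 1) ^ k / (fact (n - k) * (fact k)^2) * s ^ k)"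

end

theory Submission
  imports Defs
begin

text \<open>
  For s \<ge> 0 the weight (1 - 2s) e^(-\<zeta>s) s^k is at most 8 \<cdot> 2^k k! e^(-s/4), so the n-th
  term of the series is dominated by e^(-s/4) times c_2n (p(2\<zeta> - 1))^n / n!, the sum over k
  collapsing by the binomial theorem. The growth condition c_m^(1/m) = o(\<surd>m) together with
  n^n / n! \<le> e^n makes these coefficients summable for every p, so the partial sums have an
  integrable majorant and dominated convergence justifies integrating term by term.
\<close>

lemma power_div_fact_le_exp:
  fixes x :: real
  assumes "x \<ge> 0"
  shows "x ^ k / fact k \<le> exp x"
proof -
  have "(\<Sum>n\<in>{k}. x ^ n /\<^sub>R fact n) \<le> (\<Sum>n. x ^ n /\<^sub>R fact n)"
    by (rule sum_le_suminf[OF summable_exp_generic]) (use assms in auto)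
  then show ?thesis
    by (simp add: exp_def divide_inverse mult.commute)
qed

lemma sum_power_div_fact_fact:
  fixes x :: real
  shows "(\<Sum>k\<le>n. x ^ k / (fact (n - k) * fact k)) = (1 + x) ^ n / fact n"
proof -
  have "(x + 1) ^ n = (\<Sum>k\<le>n. of_nat (n choose k) * x ^ k * 1 ^ (n - k))"
    by (rule binomial_ring)
  also have "\<dots> = fact n * (\<Sum>k\<le>n. x ^ k / (fact (n - k) * fact k))"
    by (simp add: sum_distrib_left binomial_fact field_simps)
  finally show ?thesis
    by (simp add: field_simps add.commute)
qed

lemma abs_weight_le:
  fixes s \<zeta> :: real
  assumes s: "s \<ge> 0" and \<zeta>: "\<zeta> \<ge> 1"
  shows "\<bar>1 - 2 * s\<bar> * exp (- \<zeta> * s) * s ^ k \<le> 8 * 2 ^ k * fact k * exp (- s / 4)"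
proof -
  have linear: "\<bar>1 - 2 * s\<bar> \<le> 8 * exp (s / 4)"
    using exp_ge_add_one_self[of "s / 4"] s by linarith
  have "(s / 2) ^ k / fact k \<le> exp (s / 2)"
    using power_div_fact_le_exp[of "s / 2" k] s by simp
  then have power: "s ^ k \<le> 2 ^ k * fact k * exp (s / 2)"
    by (simp add: field_simps power_divide)
  have decay: "exp (- \<zeta> * s) \<le> exp (- s)"
    using mult_right_mono[OF \<zeta> s] by simp
  have "\<bar>1 - 2 * s\<bar> * exp (- \<zeta> * s) * s ^ k
      \<le> (8 * exp (s / 4)) * exp (- s) * (2 ^ k * fact k * exp (s / 2))"
    by (intro mult_mono linear power decay) (use s in auto)
  also have "\<dots> = 8 * 2 ^ k * fact k * exp (- s / 4)"
    by (simp add: mult_exp_exp)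
  finally show ?thesis .
qed

lemma abs_weighted_poly_le:
  fixes s \<zeta> :: real
  assumes s: "s \<ge> 0" and \<zeta>: "\<zeta> \<ge> 1"
  shows "\<bar>(1 - 2 * s) * exp (- \<zeta> * s) *
           (\<Sum>k\<le>n. (-1) ^ (n - k) * (\<zeta> - 1) ^ k / (fact (n - k) * (fact k)\<^sup>2) * s ^ k)\<bar>
         \<le> 8 * exp (- s / 4) * (2 * \<zeta> - 1) ^ n / fact n"
proof -
  define w where "w k = (\<zeta> - 1) ^ k / (fact (n - k) * (fact k)\<^sup>2)" for k
  define g where "g k = \<bar>1 - 2 * s\<bar> * exp (- \<zeta> * s) * s ^ k" for k
  have w_nonneg: "w k \<ge> 0" for k
    using \<zeta> by (simp add: w_def)
  have "\<bar>(1 - 2 * s) * exp (- \<zeta> * s) *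
           (\<Sum>k\<le>n. (-1) ^ (n - k) * (\<zeta> - 1) ^ k / (fact (n - k) * (fact k)\<^sup>2) * s ^ k)\<bar>
      \<le> (\<Sum>k\<le>n. \<bar>(1 - 2 * s) * exp (- \<zeta> * s) *
           ((-1) ^ (n - k) * (\<zeta> - 1) ^ k / (fact (n - k) * (fact k)\<^sup>2) * s ^ k)\<bar>)"
    unfolding sum_distrib_left by (rule sum_abs)
  also have "\<dots> = (\<Sum>k\<le>n. w k * g k)"
    using s \<zeta> by (simp add: w_def g_def abs_mult power_abs mult_ac)
  also have "\<dots> \<le> (\<Sum>k\<le>n. w k * (8 * 2 ^ k * fact k * exp (- s / 4)))"
    unfolding g_def by (intro sum_mono mult_left_mono abs_weight_le s \<zeta> w_nonneg)
  also have "\<dots> = 8 * exp (- s / 4) * (\<Sum>k\<le>n. (2 * (\<zeta> - 1)) ^ k / (fact (n - k) * fact k))"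
    unfolding sum_distrib_left w_def power_mult_distrib
    by (intro sum.cong refl) (simp add: field_simps power2_eq_square)
  also have "\<dots> = 8 * exp (- s / 4) * (2 * \<zeta> - 1) ^ n / fact n"
    using sum_power_div_fact_fact[of "2 * (\<zeta> - 1)" n] by simp
  finally show ?thesis .
qed

lemma moment_nonneg:
  assumes "\<And>r. r \<ge> 0 \<Longrightarrow> f r \<ge> 0"
  shows "moment f m \<ge> 0"
proof (cases "(\<lambda>r. f r * r ^ (m + 1)) integrable_on {0..}")
  case True
  then show ?thesis
    unfolding moment_def using assms by (intro mult_nonneg_nonneg integral_nonneg) auto
next
  case False
  then show ?thesis
    by (simp add: moment_def not_integrable_integral)
qed

lemma abs_lemma9_term_le:
  fixes s :: real
  assumes f: "\<And>r. r \<ge> 0 \<Longrightarrow> f r \<ge> 0" and s: "s \<ge> 0" and \<zeta>: "\<zeta> \<ge> 1" and p: "p \<ge> 0"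
  shows "\<bar>lemma9_term f p \<zeta> n s\<bar>
    \<le> moment f (2 * n) * (p * (2 * \<zeta> - 1)) ^ n / fact n * (8 * exp (- s / 4))"
proof -
  have c: "moment f (2 * n) \<ge> 0"
    using f by (rule moment_nonneg)
  have "\<bar>lemma9_term f p \<zeta> n s\<bar> = moment f (2 * n) * p ^ n *
      \<bar>(1 - 2 * s) * exp (- \<zeta> * s) *
        (\<Sum>k\<le>n. (-1) ^ (n - k) * (\<zeta> - 1) ^ k / (fact (n - k) * (fact k)\<^sup>2) * s ^ k)\<bar>"
    using c p by (simp add: lemma9_term_def abs_mult mult_ac)
  also have "\<dots> \<le> moment f (2 * n) * p ^ n * (8 * exp (- s / 4) * (2 * \<zeta> - 1) ^ n / fact n)"
    using c p by (intro mult_left_mono abs_weighted_poly_le s \<zeta>) auto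
  also have "\<dots> = moment f (2 * n) * (p * (2 * \<zeta> - 1)) ^ n / fact n * (8 * exp (- s / 4))"
    by (simp add: power_mult_distrib)
  finally show ?thesis .
qed

lemma summable_even_coeffs_div_fact:
  fixes c :: "nat \<Rightarrow> real" and R :: real
  assumes c: "\<And>m. c m \<ge> 0"
    and growth: "(\<lambda>m. c m powr (1 / real m)) \<in> o(\<lambda>m. sqrt (real m))"
  shows "summable (\<lambda>n. c (2 * n) * R ^ n / fact n)"
proof -
  define K where "K = 4 * (\<bar>R\<bar> + 1) * exp 1"
  have K: "K > 0" "4 * \<bar>R\<bar> * exp 1 \<le> K"
    by (simp_all add: K_def add_pos_nonneg algebra_simps)
  define \<epsilon> where "\<epsilon> = 1 / sqrt K"
  have \<epsilon>: "\<epsilon> > 0"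
    using K by (simp add: \<epsilon>_def)
  have ratio: "2 * \<epsilon>\<^sup>2 * \<bar>R\<bar> * exp 1 \<le> 1 / 2"
    using K by (simp add: \<epsilon>_def power_divide field_simps)
  from landau_o.smallD[OF growth \<epsilon>]
  obtain N where N: "\<And>m. m \<ge> N \<Longrightarrow> c m powr (1 / real m) \<le> \<epsilon> * sqrt (real m)"
    unfolding eventually_sequentially by auto
  have "norm (c (2 * n) * R ^ n / fact n) \<le> (1 / 2) ^ n" if n: "n \<ge> max N 1" for n
  proof -
    have root: "c (2 * n) \<le> (\<epsilon>\<^sup>2 * real (2 * n)) ^ n"
    proof (cases "c (2 * n) = 0")
      case False
      then have pos: "c (2 * n) > 0"
        using c[of "2 * n"] by simp
      have "c (2 * n) = (c (2 * n) powr (1 / real (2 * n))) ^ (2 * n)"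
        using n pos by (simp add: powr_powr powr_realpow[symmetric])
      also have "\<dots> \<le> (\<epsilon> * sqrt (real (2 * n))) ^ (2 * n)"
        using n N[of "2 * n"] by (intro power_mono) auto
      also have "\<dots> = (\<epsilon>\<^sup>2 * real (2 * n)) ^ n"
        by (simp add: power_mult power_mult_distrib)
      finally show ?thesis .
    qed (use \<epsilon> in simp)
    have "norm (c (2 * n) * R ^ n / fact n) = c (2 * n) * \<bar>R\<bar> ^ n / fact n"
      using c[of "2 * n"] by (simp add: abs_mult power_abs)
    also have "\<dots> \<le> (\<epsilon>\<^sup>2 * real (2 * n)) ^ n * \<bar>R\<bar> ^ n / fact n"
      using root by (intro divide_right_mono mult_right_mono) auto
    also have "\<dots> = (2 * \<epsilon>\<^sup>2 * \<bar>R\<bar>) ^ n * (real n ^ n / fact n)"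
      by (simp add: power_mult_distrib field_simps)
    also have "\<dots> \<le> (2 * \<epsilon>\<^sup>2 * \<bar>R\<bar>) ^ n * exp 1 ^ n"
      using power_div_fact_le_exp[of "real n" n]
      by (intro mult_left_mono) (auto simp: exp_of_nat_mult[symmetric])
    also have "\<dots> \<le> (1 / 2) ^ n"
      unfolding power_mult_distrib[symmetric] using ratio by (intro power_mono) auto
    finally show ?thesis .
  qed
  then show ?thesis
    by (intro summable_comparison_test[OF _ summable_geometric[of "1 / 2"]] exI[of _ "max N 1"]) auto
qed

lemma integrable_on_if_continuous_dominated:
  fixes g :: "'a::euclidean_space \<Rightarrow> real"
  assumes "continuous_on S g" "closed S" "h integrable_on S" "\<And>x. x \<in> S \<Longrightarrow> \<bar>g x\<bar> \<le> h x"
  shows "g integrable_on S"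
proof (rule measurable_bounded_by_integrable_imp_integrable_real)
  show "S \<in> sets lebesgue"
    using \<open>closed S\<close> by (simp add: borel_closed)
  then show "g \<in> borel_measurable (lebesgue_on S)"
    using \<open>continuous_on S g\<close> by (intro continuous_imp_measurable_on_sets_lebesgue)
qed (fact assms)+

lemma
  fixes g :: "nat \<Rightarrow> 'a::euclidean_space \<Rightarrow> real"
  assumes g: "\<And>n. g n integrable_on S"
    and dominated: "\<And>n x. x \<in> S \<Longrightarrow> \<bar>g n x\<bar> \<le> a n * h x"
    and a: "summable a" "\<And>n. a n \<ge> 0"
    and h: "h integrable_on S" "\<And>x. x \<in> S \<Longrightarrow> h x \<ge> 0"
  shows summable_dominated_series: "x \<in> S \<Longrightarrow> summable (\<lambda>n. g n x)"
    and integrable_on_suminf_dominated: "(\<lambda>x. \<Sum>n. g n x) integrable_on S"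
    and sums_integral_dominated: "(\<lambda>n. integral S (g n)) sums integral S (\<lambda>x. \<Sum>n. g n x)"
proof -
  show summable: "summable (\<lambda>n. g n x)" if "x \<in> S" for x
    using dominated[OF that] by (intro summable_comparison_test[OF _ summable_mult2[OF a(1)]]) auto
  define P where "P k x = (\<Sum>n<k. g n x)" for k x
  have "norm (P k x) \<le> suminf a * h x" if x: "x \<in> S" for k x
  proof -
    have "norm (P k x) \<le> (\<Sum>n<k. a n * h x)"
      unfolding P_def by (intro sum_norm_le) (simp add: dominated x)
    also have "\<dots> \<le> suminf a * h x"
      unfolding sum_distrib_right[symmetric]
      using a h(2)[OF x] by (intro mult_right_mono sum_le_suminf) auto
    finally show ?thesis .
  qed
  moreover have "(\<lambda>k. P k x) \<longlonglongrightarrow> (\<Sum>n. g n x)" if "x \<in> S" for x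
    unfolding P_def by (intro summable_LIMSEQ summable that)
  moreover have "P k integrable_on S" for k
    unfolding P_def using g by (intro integrable_sum) auto
  moreover have "integral S (P k) = (\<Sum>n<k. integral S (g n))" for k
    unfolding P_def using g by (intro integral_sum) auto
  ultimately show "(\<lambda>x. \<Sum>n. g n x) integrable_on S"
    and "(\<lambda>n. integral S (g n)) sums integral S (\<lambda>x. \<Sum>n. g n x)"
    using dominated_convergence[of P S "\<lambda>x. suminf a * h x"] integrable_cmul[OF h(1)]
    by (auto simp: sums_def)
qed

theorem lemma9:
  fixes f :: "real \<Rightarrow> real" and F p \<zeta> :: real
  assumes bound: "\<And>r. r \<ge> 0 \<Longrightarrow> 0 \<le> f r \<and> f r \<le> F"
    and c0_ex: "moment_exists f 0" and c0_pos: "moment f 0 > 0"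
    and c2n_ex: "\<And>n. moment_exists f (2 * n)"
    and growth: "(\<lambda>n. moment f n powr (1 / real n)) \<in> o(\<lambda>n. sqrt (real n))"
    and p: "p > 0" and zeta: "\<zeta> > 1"
  shows "(\<forall>s\<ge>0. summable (\<lambda>n. lemma9_term f p \<zeta> n s))
    \<and> (\<forall>n. lemma9_term f p \<zeta> n integrable_on {0..})
    \<and> (\<exists>I. ((\<lambda>s. \<Sum>n. lemma9_term f p \<zeta> n s) has_integral I) {0..}
          \<and> (\<lambda>n. integral {0..} (lemma9_term f p \<zeta> n)) sums I)"
proof -
  have f: "\<And>r. r \<ge> 0 \<Longrightarrow> f r \<ge> 0"
    using bound by blast
  define a where "a n = moment f (2 * n) * (p * (2 * \<zeta> - 1)) ^ n / fact n" for n
  define h :: "real \<Rightarrow> real" where "h = (\<lambda>s. 8 * exp (- s / 4))"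
  have a: "summable a" "\<And>n. a n \<ge> 0"
    unfolding a_def using moment_nonneg[OF f] p zeta
    by (auto intro!: summable_even_coeffs_div_fact[OF moment_nonneg[OF f] growth])
  have h: "h integrable_on {0..}" "\<And>s. h s \<ge> 0"
    using integrable_cmul[OF integrable_on_exp_minus_to_infinity[of "1 / 4" 0], of 8]
    by (simp_all add: h_def)
  have dominated: "\<bar>lemma9_term f p \<zeta> n s\<bar> \<le> a n * h s" if "s \<in> {0..}" for n s
    unfolding a_def h_def using abs_lemma9_term_le[OF f, where s=s and n=n] that p zeta by simp
  have integrable: "lemma9_term f p \<zeta> n integrable_on {0..}" for n
  proof (rule integrable_on_if_continuous_dominated)
    show "continuous_on {0..} (lemma9_term f p \<zeta> n)"
      unfolding lemma9_term_def by (intro continuous_intros)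
    show "(\<lambda>s. a n * h s) integrable_on {0..}"
      using integrable_cmul[OF h(1), of "a n"] by simp
  qed (auto intro: dominated)
  show ?thesis
    using summable_dominated_series[OF integrable dominated a h]
      integrable_on_suminf_dominated[OF integrable dominated a h]
      sums_integral_dominated[OF integrable dominated a h] integrable
    by (blast intro: integrable_integral)
qed

end
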